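(* Let $0<p,q<\infty$ and let $\mu$ be a finite positive Borel measure on $\overline{\mathbb{D}}$ such that for some $C>0$, $\|f\|_{H^p}\le C\|f\|_{L^q(\overline{\mathbb{D}},\mu)}$ for every $f\in H^p(\mathbb{D})\cap C(\overline{\mathbb{D}})$. Let $\nu=\mu|_{\partial\mathbb{D}}$ be the restriction of $\mu$ to the unit circle. Then $\|f\|_{H^p}\le C\|f\|_{L^q(\nu)}$ for every $f\in H^p(\mathbb{D})\cap C(\overline{\mathbb{D}})$, with the same constant $C$.
   Context: $H^p=H^p(\mathbb{D})$ ($0<p<\infty$) is the space of holomorphic $f$ on the unit disc $\mathbb{D}$ with $\|f\|_{H^p}^p=\sup_{0<r<1}\int_0^1|f(re^{2\pi it})|^p\,dt<\infty$. *)

theory Defs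
  imports "HOL-Analysis.Analysis"
begin

definition circle_mean :: "real \<Rightarrow> (complex \<Rightarrow> complex) \<Rightarrow> real \<Rightarrow> real" where
  "circle_mean p f r = integral {0..1} (\<lambda>t. cmod (f (complex_of_real r * cis (2 * pi * t))) powr p)"

definition in_Hardy :: "real \<Rightarrow> (complex \<Rightarrow> complex) \<Rightarrow> bool" where
  "in_Hardy p f \<longleftrightarrow> f holomorphic_on ball 0 1 \<and>
     (\<forall>r\<in>{0<..<1}. (\<lambda>t. cmod (f (complex_of_real r * cis (2 * pi * t))) powr p) integrable_on {0..1}) \<and>
     bdd_above (circle_mean p f ` {0<..<1})"

definition Hardy_norm :: "real \<Rightarrow> (complex \<Rightarrow> complex) \<Rightarrow> real" where
  "Hardy_norm p f = (SUP r\<in>{0<..<1}. circle_mean p f r) powr (1 / p)"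

definition Lq_norm :: "real \<Rightarrow> complex measure \<Rightarrow> (complex \<Rightarrow> complex) \<Rightarrow> real" where
  "Lq_norm q M f = (\<integral>z. cmod (f z) powr q \<partial>M) powr (1 / q)"

end

theory Submission
  imports Defs "HOL-Complex_Analysis.Complex_Analysis"
begin

text \<open>
  Test the hypothesis on \<open>z ^ n * f z\<close>. On the measure side, \<open>norm (z ^ n * f z) \<le> norm (f z)\<close>
  on the closed disc, and \<open>z ^ n * f z\<close> tends in modulus to \<open>f z\<close> on the circle and to \<open>0\<close>
  inside, so by dominated convergence the \<open>L^q(\<mu>)\<close> norms of \<open>z ^ n * f\<close> tend to the
  \<open>L^q(\<nu>)\<close> norm of \<open>f\<close>. On the Hardy side, the \<open>p\<close>-th power of the \<open>H^p\<close> norm of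
  \<open>z ^ n * f\<close> is the supremum over \<open>s < 1\<close> of \<open>s ^ (n * p)\<close> times the integral mean of
  \<open>f\<close> on the circle of radius \<open>s\<close>; it still dominates every single integral mean of \<open>f\<close>,
  because these means are nondecreasing in the radius. That monotonicity is proved by dividing
  out the zeros inside the circle with Blaschke factors, which can only increase \<open>norm f\<close>
  inside and keep it on the circle, and then applying the Poisson integral formula to a
  holomorphic branch of the \<open>p\<close>-th power of the zero-free quotient.
\<close>

section \<open>The Poisson integral\<close>

definition Poisson_kernel :: "complex \<Rightarrow> complex \<Rightarrow> real" where
  "Poisson_kernel z e = (1 - norm z ^ 2) / norm (e - z) ^ 2"

lemma Poisson_kernel_nonneg: "norm z \<le> 1 \<Longrightarrow> 0 \<le> Poisson_kernel z e"
  by (simp add: Poisson_kernel_def power_le_one)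

lemma Poisson_kernel_radial_swap:
  fixes a b :: complex
  assumes a: "norm a = 1" and b: "norm b = 1"
  shows "Poisson_kernel (of_real r * a) b = Poisson_kernel (of_real r * b) a"
proof -
  have aa: "a * cnj a = 1" and bb: "b * cnj b = 1"
    using a b by (metis complex_norm_square of_real_1 power_one)+
  have "a * b * cnj (b - of_real r * a) = a * (b * cnj b) - of_real r * b * (a * cnj a)"
    by (simp add: algebra_simps)
  then have "a - of_real r * b = a * b * cnj (b - of_real r * a)"
    using aa bb by simp
  then have "norm (a - of_real r * b) = norm a * norm b * norm (cnj (b - of_real r * a))"
    by (simp only: norm_mult)
  then have "norm (a - of_real r * b) = norm (b - of_real r * a)"
    using a b by (simp only: complex_mod_cnj)
  then show ?thesis
    using a b by (simp add: Poisson_kernel_def norm_mult)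
qed

lemma one_minus_mult_nonzero:
  fixes a u :: "'a :: real_normed_div_algebra"
  assumes "norm a * norm u < 1"
  shows "1 - a * u \<noteq> 0"
  using assms by (metis norm_mult norm_one order.irrefl right_minus_eq)

lemma Cauchy_kernel_add_reflection:
  fixes e z :: complex
  assumes e: "norm e = 1" and z: "norm z < 1"
  shows "e / (e - z) + cnj z * e / (1 - cnj z * e) = of_real (Poisson_kernel z e)"
proof -
  have ee: "cnj e * e = 1"
    using e by (metis complex_norm_square mult.commute of_real_1 power_one)
  have ez: "e - z \<noteq> 0" and cez: "cnj (e - z) \<noteq> 0"
    using e z by auto
  have "1 - cnj z * e = e * cnj (e - z)"
    using ee by (simp add: algebra_simps)
  moreover have "e \<noteq> 0"
    using e by auto
  ultimately have "cnj z * e / (1 - cnj z * e) = cnj z / cnj (e - z)"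
    by simp
  then have "e / (e - z) + cnj z * e / (1 - cnj z * e) = e / (e - z) + cnj z / cnj (e - z)"
    by simp
  also have "\<dots> = (e * cnj (e - z) + cnj z * (e - z)) / ((e - z) * cnj (e - z))"
    using ez cez by (simp add: field_simps)
  also have "e * cnj (e - z) + cnj z * (e - z) = 1 - z * cnj z"
    using ee by (simp add: algebra_simps)
  moreover have "of_real (norm (e - z) ^ 2) = (e - z) * cnj (e - z)"
    and "of_real (norm z ^ 2) = z * cnj z"
    by (rule complex_norm_square)+
  ultimately show ?thesis
    by (simp add: Poisson_kernel_def)
qed

lemma has_integral_cis_of_has_contour_integral:
  assumes "(f has_contour_integral I) (circlepath 0 1)"
  shows "((\<lambda>t. f (cis (2 * pi * t)) * (2 * pi * \<i> * cis (2 * pi * t))) has_integral I) {0..1}"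
  using assms unfolding has_contour_integral_def
proof (rule has_integral_eq[rotated])
  fix t :: real
  assume "t \<in> {0..1}"
  moreover have "circlepath 0 1 t = cis (2 * pi * t)"
    by (simp add: circlepath cis_conv_exp mult_ac)
  ultimately show "f (circlepath 0 1 t) * vector_derivative (circlepath 0 1) (at t within {0..1}) =
      f (cis (2 * pi * t)) * (2 * pi * \<i> * cis (2 * pi * t))"
    by (simp add: vector_derivative_circlepath01 cis_conv_exp mult_ac)
qed

lemma Poisson_integral_formula:
  fixes k :: "complex \<Rightarrow> complex"
  assumes holk: "k holomorphic_on ball 0 R" and R: "1 < R" and z: "norm z < 1"
  shows "((\<lambda>t. k (cis (2 * pi * t)) * of_real (Poisson_kernel z (cis (2 * pi * t)))) has_integral k z) {0..1}"
proof -
  define R' where "R' = min R (2 / (1 + norm z))"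
  have "1 < 2 / (1 + norm z)"
    using z by (simp add: field_simps add_pos_nonneg)
  then have R'1: "1 < R'"
    using R by (auto simp: R'_def)
  have "1 - cnj z * u \<noteq> 0" if "u \<in> ball 0 R'" for u
  proof (rule one_minus_mult_nonzero)
    have "norm z * norm u \<le> norm z * (2 / (1 + norm z))"
      using that by (intro mult_left_mono) (auto simp: R'_def)
    also have "\<dots> < 1"
      using z by (simp add: field_simps add_pos_nonneg)
    finally show "norm (cnj z) * norm u < 1" by simp
  qed
  then have "(\<lambda>u. k u * cnj z / (1 - cnj z * u)) holomorphic_on ball 0 R'"
    using holk by (auto intro!: holomorphic_intros intro: holomorphic_on_subset simp: R'_def)
  \<comment> \<open>the reflected kernel has its pole outside the closed disc, so it integrates to zero\<close>
  then have reflected: "((\<lambda>u. k u * cnj z / (1 - cnj z * u)) has_contour_integral 0) (circlepath 0 1)"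
    by (rule Cauchy_theorem_disc_simple) (use R'1 in \<open>auto simp: path_image_circlepath\<close>)
  have "k holomorphic_on cball 0 1"
    using R by (auto intro: holomorphic_on_subset[OF holk])
  then have "((\<lambda>u. k u / (u - z)) has_contour_integral (2 * of_real pi * \<i> * k z)) (circlepath 0 1)"
    using z by (intro Cauchy_integral_circlepath)
      (auto intro: holomorphic_on_imp_continuous_on holomorphic_on_subset)
  from has_integral_add[OF this[THEN has_integral_cis_of_has_contour_integral]
      reflected[THEN has_integral_cis_of_has_contour_integral]]
  have "((\<lambda>t. (1 / (2 * pi * \<i>)) * ((k (cis (2 * pi * t)) / (cis (2 * pi * t) - z)
          + k (cis (2 * pi * t)) * cnj z / (1 - cnj z * cis (2 * pi * t))) * (2 * pi * \<i> * cis (2 * pi * t))))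
        has_integral k z) {0..1}"
    by (auto dest: has_integral_mult_right[where c = "1 / (2 * pi * \<i>)"] simp: algebra_simps)
  then show ?thesis
  proof (rule has_integral_eq[rotated])
    fix t :: real
    define e where "e = cis (2 * pi * t)"
    have e: "norm e = 1" by (simp add: e_def)
    have cancel: "(1 / c) * ((K / d1 + K * w / d2) * (c * e)) = K * (e / d1 + w * e / d2)"
      if "c \<noteq> 0" "d1 \<noteq> 0" "d2 \<noteq> 0" for c d1 d2 K w :: complex
      using that by (simp add: field_simps)
    have "e - z \<noteq> 0" "1 - cnj z * e \<noteq> 0"
      using e z one_minus_mult_nonzero[of "cnj z" e] by auto
    then have "(1 / (2 * pi * \<i>)) * ((k e / (e - z) + k e * cnj z / (1 - cnj z * e)) * (2 * pi * \<i> * e))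
        = k e * (e / (e - z) + cnj z * e / (1 - cnj z * e))"
      using cancel[of "2 * pi * \<i>" "e - z" "1 - cnj z * e" "k e" "cnj z"] by (simp add: mult.commute)
    then show "(1 / (2 * pi * \<i>)) * ((k (cis (2 * pi * t)) / (cis (2 * pi * t) - z)
          + k (cis (2 * pi * t)) * cnj z / (1 - cnj z * cis (2 * pi * t))) * (2 * pi * \<i> * cis (2 * pi * t)))
        = k (cis (2 * pi * t)) * of_real (Poisson_kernel z (cis (2 * pi * t)))"
      using Cauchy_kernel_add_reflection[OF e z] by (simp add: e_def)
  qed
qed

lemma Poisson_kernel_has_integral_1:
  assumes "norm z < 1"
  shows "((\<lambda>t. Poisson_kernel z (cis (2 * pi * t))) has_integral 1) {0..1}"
  using has_integral_Re[OF Poisson_integral_formula[of "\<lambda>_. 1" 2, OF _ _ assms]] by simp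

lemma integral_norm_circle_le_boundary:
  fixes k :: "complex \<Rightarrow> complex"
  assumes holk: "k holomorphic_on ball 0 R" and R: "1 < R" and r: "0 \<le> r" "r < 1"
  shows "integral {0..1} (\<lambda>s. norm (k (of_real r * cis (2 * pi * s))))
         \<le> integral {0..1} (\<lambda>t. norm (k (cis (2 * pi * t))))"
proof -
  define E where "E t = cis (2 * pi * t)" for t :: real
  define F where "F s t = norm (k (E t)) * Poisson_kernel (of_real r * E s) (E t)" for s t
  have nE: "norm (E t) = 1" for t
    by (simp add: E_def)
  have inner: "norm (of_real r * E t) < 1" for t
    using r by (simp add: norm_mult nE)
  have contk: "continuous_on (ball 0 R) k"
    using holk holomorphic_on_imp_continuous_on by blast
  have contE: "continuous_on UNIV E"
    unfolding E_def by (intro continuous_intros)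
  have contkE: "continuous_on UNIV (\<lambda>t. k (E t))"
    unfolding E_def by (rule continuous_on_compose2[OF contk]) (use R in \<open>auto intro!: continuous_intros\<close>)
  moreover have "norm (E t - of_real r * E s) > 0" for s t
  proof -
    have "1 - r \<le> norm (E t - of_real r * E s)"
      using norm_triangle_ineq2[of "E t" "of_real r * E s"] r by (simp add: norm_mult nE)
    then show ?thesis
      using r by linarith
  qed
  then have contF: "continuous_on UNIV (\<lambda>(s, t). F s t)"
    unfolding F_def Poisson_kernel_def
    by (auto intro!: continuous_intros continuous_on_compose2[OF contkE] continuous_on_compose2[OF contE]
        simp: case_prod_unfold)
  then have contF': "continuous_on (cbox (0, 0) (1, 1)) (\<lambda>(s, t). F s t)"
    by (rule continuous_on_subset) simp
  have "norm (k (of_real r * E s)) \<le> integral {0..1} (F s)" for s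
  proof -
    have Poisson: "((\<lambda>t. k (E t) * of_real (Poisson_kernel (of_real r * E s) (E t)))
        has_integral k (of_real r * E s)) {0..1}"
      unfolding E_def by (rule Poisson_integral_formula[OF holk R inner[unfolded E_def]])
    have "continuous_on {0..1} (\<lambda>t. (\<lambda>(s, t). F s t) (s, t))"
      by (rule continuous_on_compose2[OF contF]) (auto intro!: continuous_intros)
    then have "F s integrable_on {0..1}"
      by (simp add: integrable_continuous_interval)
    have "norm (k (of_real r * E s))
        = norm (integral {0..1} (\<lambda>t. k (E t) * of_real (Poisson_kernel (of_real r * E s) (E t))))"
      using Poisson by (simp add: integral_unique)
    also have "\<dots> \<le> integral {0..1} (F s)"
      using Poisson \<open>F s integrable_on {0..1}\<close> inner
      by (intro integral_norm_bound_integral)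
        (auto simp: F_def norm_mult Poisson_kernel_nonneg less_imp_le)
    finally show ?thesis .
  qed
  moreover have "(\<lambda>s. norm (k (of_real r * E s))) integrable_on {0..1}"
    unfolding E_def using r R
    by (intro integrable_continuous_interval continuous_on_norm continuous_on_compose2[OF contk])
      (auto intro!: continuous_intros simp: norm_mult)
  moreover have "continuous_on {0..1} (\<lambda>s. integral (cbox 0 1) (F s))"
    by (rule integral_continuous_on_param) (use continuous_on_subset[OF contF] in auto)
  then have "(\<lambda>s. integral {0..1} (F s)) integrable_on {0..1}"
    by (simp add: integrable_continuous_interval cbox_interval)
  ultimately have "integral {0..1} (\<lambda>s. norm (k (of_real r * E s)))
      \<le> integral {0..1} (\<lambda>s. integral {0..1} (F s))"
    by (intro integral_le) auto
  also have "\<dots> = integral {0..1} (\<lambda>t. integral {0..1} (\<lambda>s. F s t))"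
    using integral_swap_continuous[of 0 0 1 1 F] contF' by (simp add: cbox_interval)
  also have "\<dots> = integral {0..1} (\<lambda>t. norm (k (E t)))"
  proof (rule integral_cong)
    fix t :: real
    have "((\<lambda>s. Poisson_kernel (of_real r * E s) (E t)) has_integral 1) {0..1}"
      using Poisson_kernel_has_integral_1[OF inner[of t], folded E_def]
      by (simp only: Poisson_kernel_radial_swap[OF nE nE, of r _ t])
    then show "integral {0..1} (\<lambda>s. F s t) = norm (k (E t))"
      unfolding F_def by (simp add: integral_unique has_integral_mult_right)
  qed
  finally show ?thesis
    unfolding E_def .
qed

section \<open>Monotonicity of integral means\<close>

lemma circle_mean_nonneg: "0 \<le> circle_mean p f r"
  unfolding circle_mean_def by (metis integral_nonneg not_integrable_integral order_refl powr_ge_zero)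

lemma circle_integrand_integrable:
  fixes g :: "complex \<Rightarrow> complex"
  assumes "continuous_on (sphere 0 r) g" "0 \<le> r" "0 < p"
  shows "(\<lambda>t. norm (g (of_real r * cis (2 * pi * t))) powr p) integrable_on {0..1}"
proof (rule integrable_continuous_interval)
  have c: "continuous_on {0..1} (\<lambda>t. g (of_real r * cis (2 * pi * t)))"
    by (rule continuous_on_compose2[OF assms(1)]) (use assms in \<open>auto intro!: continuous_intros simp: norm_mult\<close>)
  show "continuous_on {0..1} (\<lambda>t. norm (g (of_real r * cis (2 * pi * t))) powr p)"
    by (rule continuous_on_powr'[where g = "\<lambda>_. p"]) (use c assms(3) in \<open>auto intro!: continuous_intros\<close>)
qed

lemma circle_mean_mono:
  assumes "continuous_on (sphere 0 r) f" "continuous_on (sphere 0 r) g" "0 \<le> r" "0 < p"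
    and "\<And>z. z \<in> sphere 0 r \<Longrightarrow> norm (f z) \<le> norm (g z)"
  shows "circle_mean p f r \<le> circle_mean p g r"
  unfolding circle_mean_def using assms
  by (intro integral_le circle_integrand_integrable powr_mono2) (auto simp: norm_mult)

lemma circle_mean_cong:
  assumes "\<And>z. z \<in> sphere 0 r \<Longrightarrow> norm (f z) = norm (g z)" "0 \<le> r"
  shows "circle_mean p f r = circle_mean p g r"
  unfolding circle_mean_def using assms by (simp add: norm_mult)

lemma circle_mean_le_boundary_of_zero_free:
  fixes g :: "complex \<Rightarrow> complex"
  assumes holg: "g holomorphic_on ball 0 R" and R: "1 < R" and nz: "\<And>z. z \<in> ball 0 R \<Longrightarrow> g z \<noteq> 0"
    and r: "0 \<le> r" "r < 1" and p: "0 < p"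
  shows "circle_mean p g r \<le> circle_mean p g 1"
proof -
  obtain L where holL: "L holomorphic_on ball 0 R" and gL: "\<And>z. z \<in> ball 0 R \<Longrightarrow> g z = exp (L z)"
    using contractible_imp_holomorphic_log[OF holg convex_imp_contractible[OF convex_ball] nz] by blast
  define k where "k z = exp (of_real p * L z)" for z
  have "k holomorphic_on ball 0 R"
    unfolding k_def using holL by (auto intro!: holomorphic_intros)
  \<comment> \<open>\<open>k\<close> is a holomorphic branch of \<open>g powr p\<close>\<close>
  moreover have "norm (k z) = norm (g z) powr p" if "z \<in> cball 0 1" for z
    using gL[of z] that R by (simp add: k_def norm_exp_eq_Re exp_powr_real mult.commute)
  ultimately show ?thesis
    using integral_norm_circle_le_boundary[of k R r] R r
    by (simp add: circle_mean_def norm_mult)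
qed

lemma open_superset_cball_imp_ball:
  fixes a :: "'a :: {real_normed_vector, heine_borel}"
  assumes "open S" "cball a r \<subseteq> S" "0 \<le> r"
  obtains e where "0 < e" "ball a (r + e) \<subseteq> S"
proof -
  obtain e where e: "0 < e" "(\<Union>x\<in>cball a r. ball x e) \<subseteq> S"
    using compact_subset_open_imp_ball_epsilon_subset[OF compact_cball assms(1,2)] by blast
  have "z \<in> S" if z: "z \<in> ball a (r + e)" for z
  proof -
    define x where "x = a + (r / (r + e)) *\<^sub>R (z - a)"
    have "dist a x = r / (r + e) * dist a z"
      using e assms(3) by (simp add: x_def dist_norm norm_minus_commute)
    also have "\<dots> \<le> r / (r + e) * (r + e)"
      using z e assms(3) by (intro mult_left_mono) auto
    finally have x: "x \<in> cball a r"
      using e assms(3) by simp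
    have "e / (r + e) = 1 - r / (r + e)"
      using e assms(3) by (simp add: field_simps)
    then have "z - x = (e / (r + e)) *\<^sub>R (z - a)"
      by (simp add: x_def scaleR_diff_left)
    then have "dist x z = e / (r + e) * dist a z"
      using e assms(3) by (simp add: dist_norm norm_minus_commute[of x] norm_minus_commute[of a])
    also have "\<dots> < e / (r + e) * (r + e)"
      using z e assms(3) by (intro mult_strict_left_mono) auto
    finally have "dist x z < e"
      using e assms(3) by simp
    then have "z \<in> (\<Union>x\<in>cball a r. ball x e)"
      using x by auto
    then show ?thesis
      using e(2) by blast
  qed
  then show ?thesis
    using that e(1) by blast
qed

lemma finite_zeros_in_compact:
  assumes "f holomorphic_on S" "open S" "connected S" "compact K" "K \<subseteq> S" "w \<in> S" "f w \<noteq> 0"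
  shows "finite {z\<in>K. f z = 0}"
proof (cases "f constant_on S")
  case True
  then have "{z\<in>K. f z = 0} = {}"
    using assms(5-7) by (auto simp: constant_on_def)
  then show ?thesis
    by (metis finite.emptyI)
next
  case False
  then show ?thesis
    using holomorphic_compact_finite_zeros assms(1-5) by blast
qed

lemma holomorphic_factor_zero_global:
  assumes holf: "f holomorphic_on S" and S: "open S" "connected S"
    and b: "b \<in> S" "f b = 0" and nonconst: "\<not> f constant_on S"
  obtains m h where "0 < m" "h holomorphic_on S" "h b \<noteq> 0"
    "\<And>w. w \<in> S \<Longrightarrow> f w = (w - b) ^ m * h w"
proof -
  obtain m \<rho> g where m: "0 < m" and \<rho>: "0 < \<rho>" "ball b \<rho> \<subseteq> S"
    and holg: "g holomorphic_on ball b \<rho>"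
    and fg: "\<And>w. w \<in> ball b \<rho> \<Longrightarrow> f w = (w - b) ^ m * g w"
    and gnz: "\<And>w. w \<in> ball b \<rho> \<Longrightarrow> g w \<noteq> 0"
    using holomorphic_factor_zero_nonconstant[OF holf S b nonconst] by metis
  define h where "h w = (if w = b then g b else f w / (w - b) ^ m)" for w
  have hg: "h w = g w" if "w \<in> ball b \<rho>" for w
    using fg[OF that] by (cases "w = b") (auto simp: h_def)
  have "h holomorphic_on (S - {b})"
    by (rule holomorphic_transform[of "\<lambda>w. f w / (w - b) ^ m"])
       (auto intro!: holomorphic_intros intro: holomorphic_on_subset[OF holf] simp: h_def)
  moreover have "h holomorphic_on ball b \<rho>"
    by (rule holomorphic_transform[OF holg]) (simp add: hg)
  ultimately have "h holomorphic_on (S - {b}) \<union> ball b \<rho>"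
    by (intro holomorphic_on_Un) (auto simp: S)
  moreover have "(S - {b}) \<union> ball b \<rho> = S"
    using \<rho> by auto
  moreover have "f w = (w - b) ^ m * h w" if "w \<in> S" for w
    using b by (cases "w = b") (auto simp: h_def m)
  ultimately show ?thesis
    using that m hg[of b] gnz[of b] \<rho>(1) by auto
qed

lemma norm_one_minus_cnj_mult_square:
  fixes b w :: complex
  shows "norm (1 - cnj b * w) ^ 2 - norm (w - b) ^ 2 = (1 - norm w ^ 2) * (1 - norm b ^ 2)"
proof -
  have "complex_of_real (norm (1 - cnj b * w) ^ 2 - norm (w - b) ^ 2)
       = (1 - cnj b * w) * cnj (1 - cnj b * w) - (w - b) * cnj (w - b)"
    by (simp only: of_real_diff complex_norm_square)
  also have "\<dots> = (1 - w * cnj w) * (1 - b * cnj b)"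
    by (simp add: algebra_simps)
  also have "\<dots> = complex_of_real ((1 - norm w ^ 2) * (1 - norm b ^ 2))"
    by (simp only: of_real_diff of_real_mult complex_norm_square of_real_1)
  finally show ?thesis
    using of_real_eq_iff by blast
qed

lemma norm_diff_le_norm_one_minus_cnj_mult:
  fixes b w :: complex
  assumes "norm b \<le> 1" "norm w \<le> 1"
  shows "norm (w - b) \<le> norm (1 - cnj b * w)"
proof -
  have "0 \<le> (1 - norm w ^ 2) * (1 - norm b ^ 2)"
    using assms by (intro mult_nonneg_nonneg) (auto simp: power_le_one)
  then have "norm (w - b) ^ 2 \<le> norm (1 - cnj b * w) ^ 2"
    using norm_one_minus_cnj_mult_square[of b w] by linarith
  then show ?thesis
    by (rule power2_le_imp_le[OF _ norm_ge_zero])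
qed

lemma norm_diff_eq_norm_one_minus_cnj_mult:
  fixes b w :: complex
  assumes "norm w = 1"
  shows "norm (w - b) = norm (1 - cnj b * w)"
proof -
  have "norm (w - b) ^ 2 = norm (1 - cnj b * w) ^ 2"
    using norm_one_minus_cnj_mult_square[of b w] assms by simp
  then show ?thesis
    by (rule power2_eq_imp_eq[OF _ norm_ge_zero norm_ge_zero])
qed

lemma Blaschke_divide_zero:
  fixes g :: "complex \<Rightarrow> complex"
  assumes holg: "g holomorphic_on ball 0 R" and R: "1 < R"
    and b: "norm b < 1" "g b = 0" and nonconst: "\<not> g constant_on ball 0 R"
  obtains G where "G holomorphic_on ball 0 R"
    "\<And>w. norm w \<le> 1 \<Longrightarrow> norm (g w) \<le> norm (G w)"
    "\<And>w. norm w = 1 \<Longrightarrow> norm (g w) = norm (G w)"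
    "{z\<in>ball 0 1. G z = 0} = {z\<in>ball 0 1. g z = 0} - {b}"
proof -
  obtain m h where m: "0 < m" and holh: "h holomorphic_on ball 0 R" and hb: "h b \<noteq> 0"
    and gh: "\<And>w. w \<in> ball 0 R \<Longrightarrow> g w = (w - b) ^ m * h w"
    using holomorphic_factor_zero_global[OF holg open_ball connected_ball _ b(2) nonconst] b R by auto
  \<comment> \<open>replace the zero factor \<open>(w - b) ^ m\<close> by \<open>(1 - cnj b * w) ^ m\<close>, which has the same modulus on the circle\<close>
  define G where "G w = (1 - cnj b * w) ^ m * h w" for w
  have gG: "norm (g w) = norm (w - b) ^ m * norm (h w)" "norm (G w) = norm (1 - cnj b * w) ^ m * norm (h w)"
    if "norm w \<le> 1" for w
    using gh[of w] that R by (auto simp: G_def norm_mult norm_power)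
  have "G holomorphic_on ball 0 R"
    unfolding G_def using holh by (intro holomorphic_intros)
  moreover have "norm (g w) \<le> norm (G w)" if "norm w \<le> 1" for w
    using gG[OF that] norm_diff_le_norm_one_minus_cnj_mult[of b w] that b(1)
    by (auto intro!: mult_right_mono power_mono)
  moreover have "norm (g w) = norm (G w)" if "norm w = 1" for w
    using gG[of w] norm_diff_eq_norm_one_minus_cnj_mult[OF that, of b] that by simp
  moreover have "G w = 0 \<longleftrightarrow> g w = 0 \<and> w \<noteq> b" if "norm w < 1" for w
  proof -
    have "1 - cnj b * w \<noteq> 0"
      using that b(1) mult_strict_mono'[of "norm b" 1 "norm w" 1]
      by (intro one_minus_mult_nonzero) auto
    then show ?thesis
      using gh[of w] that R m hb by (auto simp: G_def)
  qed
  then have "{z\<in>ball 0 1. G z = 0} = {z\<in>ball 0 1. g z = 0} - {b}"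
    by auto
  ultimately show ?thesis
    by (rule that)
qed

lemma circle_mean_le_boundary:
  fixes g :: "complex \<Rightarrow> complex"
  assumes "g holomorphic_on ball 0 R" "1 < R" "\<And>z. norm z = 1 \<Longrightarrow> g z \<noteq> 0"
    and r: "0 \<le> r" "r < 1" and p: "0 < p"
  shows "circle_mean p g r \<le> circle_mean p g 1"
proof -
  have finite_zeros: "finite {z\<in>ball 0 1. g z = 0}"
    if "g holomorphic_on ball 0 R" "\<And>z. norm z = 1 \<Longrightarrow> g z \<noteq> 0" for g
  proof (rule finite_subset)
    show "finite {z\<in>cball 0 1. g z = 0}"
      using that \<open>1 < R\<close> by (intro finite_zeros_in_compact[of _ "ball 0 R" _ 1]) auto
  qed auto
  have "circle_mean p g r \<le> circle_mean p g 1"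
    if "g holomorphic_on ball 0 R" "\<And>z. norm z = 1 \<Longrightarrow> g z \<noteq> 0" "card {z\<in>ball 0 1. g z = 0} = n" for n g
    using that
  proof (induction n arbitrary: g)
    case 0
    then have "{z\<in>ball 0 1. g z = 0} = {}"
      using finite_zeros by auto
    then have "g z \<noteq> 0" if "z \<in> cball 0 1" for z
      using that 0(2)[of z] by (cases "norm z = 1") auto
    then have sub: "cball 0 1 \<subseteq> ball 0 R \<inter> g -` (- {0})"
      using \<open>1 < R\<close> by auto
    have "open (ball 0 R \<inter> g -` (- {0}))"
      using 0 by (intro continuous_open_preimage holomorphic_on_imp_continuous_on) auto
    then obtain e where e: "0 < e" "ball 0 (1 + e) \<subseteq> ball 0 R \<inter> g -` (- {0})"
      using open_superset_cball_imp_ball[OF _ sub] by auto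
    then have "g holomorphic_on ball 0 (1 + e)"
      using holomorphic_on_subset[OF 0(1)] by blast
    then show ?case
      using e r p by (intro circle_mean_le_boundary_of_zero_free[of g "1 + e"]) auto
  next
    case (Suc n)
    have "{z\<in>ball 0 1. g z = 0} \<noteq> {}"
      using Suc.prems(3) by (metis card.empty nat.distinct(1))
    then obtain b where b: "norm b < 1" "g b = 0" "b \<in> {z\<in>ball 0 1. g z = 0}"
      by auto
    have nonconst: "\<not> g constant_on ball 0 R"
    proof
      assume "g constant_on ball 0 R"
      then have "g 1 = g b"
        using b \<open>1 < R\<close> unfolding constant_on_def by auto
      then show False
        using b Suc.prems(2)[of 1] by simp
    qed
    obtain G where G: "G holomorphic_on ball 0 R"
      "\<And>w. norm w \<le> 1 \<Longrightarrow> norm (g w) \<le> norm (G w)"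
      "\<And>w. norm w = 1 \<Longrightarrow> norm (g w) = norm (G w)"
      "{z\<in>ball 0 1. G z = 0} = {z\<in>ball 0 1. g z = 0} - {b}"
      using Blaschke_divide_zero[OF Suc.prems(1) \<open>1 < R\<close> b(1,2) nonconst] by blast
    have "G z \<noteq> 0" if "norm z = 1" for z
      using G(3)[OF that] Suc.prems(2)[OF that] by auto
    moreover have "card {z\<in>ball 0 1. G z = 0} = n"
      using G(4) b(3) Suc.prems(3) finite_zeros[OF Suc.prems(1,2)] by simp
    ultimately have IH: "circle_mean p G r \<le> circle_mean p G 1"
      by (rule Suc.IH[OF G(1)])
    have cont: "continuous_on (sphere 0 r) F" if "F holomorphic_on ball 0 R" for F
      using r \<open>1 < R\<close>
      by (intro continuous_on_subset[OF holomorphic_on_imp_continuous_on[OF that]]) auto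
    have "circle_mean p g r \<le> circle_mean p G r"
      using Suc.prems(1) G(1,2) r p by (intro circle_mean_mono cont) auto
    also note IH
    also have "circle_mean p G 1 = circle_mean p g 1"
      using G(3) by (intro circle_mean_cong) auto
    finally show ?case .
  qed
  then show ?thesis
    using assms by blast
qed

lemma circle_mean_le_of_nonvanishing_circle:
  fixes f :: "complex \<Rightarrow> complex"
  assumes holf: "f holomorphic_on ball 0 1" and rs: "0 \<le> r" "r < s" "s < 1"
    and nz: "\<And>z. norm z = s \<Longrightarrow> f z \<noteq> 0" and p: "0 < p"
  shows "circle_mean p f r \<le> circle_mean p f s"
proof -
  define g where "g w = f (of_real s * w)" for w
  have "g holomorphic_on ball 0 (1 / s)"
    unfolding g_def using rs
    by (intro holomorphic_on_compose_gen[OF _ holf, unfolded o_def] holomorphic_intros)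
       (auto simp: norm_mult field_simps)
  moreover have "g z \<noteq> 0" if "norm z = 1" for z
    using nz[of "of_real s * z"] that rs by (simp add: g_def norm_mult)
  ultimately have "circle_mean p g (r / s) \<le> circle_mean p g 1"
    using rs p by (intro circle_mean_le_boundary[of g "1 / s"]) auto
  then show ?thesis
    using rs by (simp add: circle_mean_def g_def)
qed

lemma exists_larger_circle_mean:
  fixes f :: "complex \<Rightarrow> complex"
  assumes holf: "f holomorphic_on ball 0 1" and r: "0 \<le> r" "r \<le> s0" "s0 < 1" and p: "0 < p"
  obtains s where "s0 < s" "s < 1" "circle_mean p f r \<le> circle_mean p f s"
proof (cases "\<forall>z\<in>ball 0 1. f z = 0")
  case True
  then have "circle_mean p f r = 0"
    using r by (simp add: circle_mean_def norm_mult)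
  then show ?thesis
    using that[of "(s0 + 1) / 2"] r circle_mean_nonneg by auto
next
  case False
  then obtain w where w: "w \<in> ball 0 1" "f w \<noteq> 0"
    by blast
  define s1 where "s1 = (s0 + 1) / 2"
  have s1: "s0 < s1" "s1 < 1"
    using r by (auto simp: s1_def)
  \<comment> \<open>only finitely many radii in \<open>(s0, s1)\<close> carry a zero of \<open>f\<close>\<close>
  have "finite {z\<in>cball 0 s1. f z = 0}"
    using s1 w by (intro finite_zeros_in_compact[OF holf]) auto
  then have "infinite ({s0<..<s1} - norm ` {z\<in>cball 0 s1. f z = 0})"
    using s1 by (intro Diff_infinite_finite) auto
  then have "{s0<..<s1} - norm ` {z\<in>cball 0 s1. f z = 0} \<noteq> {}"
    by (rule infinite_imp_nonempty)
  then obtain s where s: "s \<in> {s0<..<s1}" "s \<notin> norm ` {z\<in>cball 0 s1. f z = 0}"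
    by blast
  then have "f z \<noteq> 0" if "norm z = s" for z
    using that by (auto simp: image_iff)
  then have "circle_mean p f r \<le> circle_mean p f s"
    using s s1 r p by (intro circle_mean_le_of_nonvanishing_circle[OF holf]) auto
  then show ?thesis
    using that s s1 by auto
qed

section \<open>Hardy norms of \<open>z ^ n * f\<close>\<close>

lemma circle_mean_mult_power:
  assumes "0 \<le> s"
  shows "circle_mean p (\<lambda>z. z ^ n * f z) s = (s ^ n) powr p * circle_mean p f s"
  unfolding circle_mean_def using assms
  by (simp add: norm_mult norm_power powr_mult integral_mult_right)

lemma in_Hardy_mult_power:
  assumes H: "in_Hardy p f" and p: "0 < p"
  shows "in_Hardy p (\<lambda>z. z ^ n * f z)"
proof -
  have holf: "f holomorphic_on ball 0 1"
    and intf: "\<And>r. r \<in> {0<..<1} \<Longrightarrow> (\<lambda>t. cmod (f (complex_of_real r * cis (2 * pi * t))) powr p) integrable_on {0..1}"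
    and bdd: "bdd_above (circle_mean p f ` {0<..<1})"
    using H unfolding in_Hardy_def by auto
  obtain B where B: "\<And>s. s \<in> {0<..<1} \<Longrightarrow> circle_mean p f s \<le> B"
    using bdd unfolding bdd_above_def by (metis image_eqI)
  have "circle_mean p (\<lambda>z. z ^ n * f z) s \<le> B" if s: "s \<in> {0<..<1}" for s
  proof -
    have "s ^ n \<le> 1"
      using s by (simp add: power_le_one)
    then have "(s ^ n) powr p \<le> 1 powr p"
      using s p by (intro powr_mono2) auto
    then have "(s ^ n) powr p * circle_mean p f s \<le> circle_mean p f s"
      using circle_mean_nonneg by (intro mult_left_le_one_le) auto
    then show ?thesis
      using B[OF s] s circle_mean_mult_power[of s] by simp
  qed
  then have "bdd_above (circle_mean p (\<lambda>z. z ^ n * f z) ` {0<..<1})"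
    by (intro bdd_aboveI2)
  moreover have "(\<lambda>t. cmod ((complex_of_real r * cis (2 * pi * t)) ^ n * f (complex_of_real r * cis (2 * pi * t))) powr p)
      integrable_on {0..1}" if "r \<in> {0<..<1}" for r
    using integrable_on_mult_right[OF intf[OF that], of "(r ^ n) powr p"] that
    by (simp add: norm_mult norm_power powr_mult)
  moreover have "(\<lambda>z. z ^ n * f z) holomorphic_on ball 0 1"
    using holf by (intro holomorphic_intros)
  ultimately show ?thesis
    unfolding in_Hardy_def by blast
qed

lemma circle_mean_powr_le_Hardy_norm_mult_power:
  assumes H: "in_Hardy p f" and p: "0 < p" and r: "r \<in> {0<..<1}"
  shows "circle_mean p f r powr (1 / p) \<le> Hardy_norm p (\<lambda>z. z ^ n * f z)"
proof -
  define A where "A = (SUP s\<in>{0<..<1}. circle_mean p (\<lambda>z. z ^ n * f z) s)"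
  have bdd: "bdd_above ((\<lambda>s. circle_mean p (\<lambda>z. z ^ n * f z) s) ` {0<..<1})"
    using in_Hardy_mult_power[OF H p] unfolding in_Hardy_def by auto
  have bound: "(s0 ^ n) powr p * circle_mean p f r \<le> A" if s0: "s0 \<in> {r<..<1}" for s0
  proof -
    obtain s where s: "s0 < s" "s < 1" "circle_mean p f r \<le> circle_mean p f s"
      using exists_larger_circle_mean[of f r s0 p] H s0 r p by (auto simp: in_Hardy_def)
    have "(s0 ^ n) powr p * circle_mean p f r \<le> (s ^ n) powr p * circle_mean p f s"
      using s s0 r p circle_mean_nonneg by (intro mult_mono powr_mono2 power_mono) auto
    also have "\<dots> = circle_mean p (\<lambda>z. z ^ n * f z) s"
      using s s0 r by (simp add: circle_mean_mult_power)
    also have "\<dots> \<le> A"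
      unfolding A_def using s s0 r by (intro cSUP_upper[OF _ bdd]) auto
    finally show ?thesis .
  qed
  have "\<forall>\<^sub>F s0 in at_left 1. s0 \<in> {r<..<1}"
    using r by (intro eventually_at_left_real) auto
  then have "\<forall>\<^sub>F s0 in at_left 1. (s0 ^ n) powr p * circle_mean p f r \<le> A"
    by (rule eventually_mono) (rule bound)
  moreover have "((\<lambda>s0. (s0 ^ n) powr p * circle_mean p f r) \<longlongrightarrow> (1 ^ n) powr p * circle_mean p f r) (at_left 1)"
    by (intro tendsto_intros) auto
  ultimately have "(1 ^ n) powr p * circle_mean p f r \<le> A"
    by (intro tendsto_upperbound) auto
  then show ?thesis
    unfolding Hardy_norm_def A_def using p circle_mean_nonneg by (intro powr_mono2) auto
qed

lemma Hardy_norm_le: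
  assumes p: "0 < p" and bound: "\<And>r. r \<in> {0<..<1} \<Longrightarrow> circle_mean p f r powr (1 / p) \<le> B"
  shows "Hardy_norm p f \<le> B"
proof -
  have B: "0 \<le> B"
    using bound[of "1 / 2"] by (simp add: order_trans[OF powr_ge_zero])
  have le: "circle_mean p f r \<le> B powr p" if "r \<in> {0<..<1}" for r
  proof -
    have "circle_mean p f r = (circle_mean p f r powr (1 / p)) powr p"
      using p circle_mean_nonneg by (simp add: powr_powr)
    also have "\<dots> \<le> B powr p"
      using bound[OF that] p by (intro powr_mono2) auto
    finally show ?thesis .
  qed
  then have "(SUP r\<in>{0<..<1}. circle_mean p f r) \<le> B powr p"
    by (intro cSUP_least) auto
  moreover have "bdd_above (circle_mean p f ` {0<..<1})"
    using le by (intro bdd_aboveI2[where M = "B powr p"]) auto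
  then have "circle_mean p f (1 / 2) \<le> (SUP r\<in>{0<..<1}. circle_mean p f r)"
    by (intro cSUP_upper) auto
  then have "0 \<le> (SUP r\<in>{0<..<1}. circle_mean p f r)"
    using circle_mean_nonneg order_trans by blast
  ultimately have "Hardy_norm p f \<le> (B powr p) powr (1 / p)"
    unfolding Hardy_norm_def using p by (intro powr_mono2) auto
  then show ?thesis
    using B p by (simp add: powr_powr)
qed

section \<open>Concentration on the circle\<close>

lemma integral_mult_power_tendsto_sphere:
  fixes M :: "complex measure" and f :: "complex \<Rightarrow> complex"
  assumes fin: "finite_measure M" and sM: "sets M = sets (restrict_space borel (cball (0::complex) 1))"
    and cf: "continuous_on (cball 0 1) f" and q: "0 < q"
  shows "(\<lambda>n. \<integral>z. cmod (z ^ n * f z) powr q \<partial>M) \<longlonglongrightarrow> (\<integral>z. cmod (f z) powr q \<partial>restrict_space M (sphere 0 1))"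
proof -
  have spM: "space M = cball 0 1"
    using sets_eq_imp_space_eq[OF sM] by (simp add: space_restrict_space)
  have meas: "h \<in> borel_measurable M" if "continuous_on (cball 0 1) h" for h :: "complex \<Rightarrow> real"
    unfolding measurable_cong_sets[OF sM refl] by (rule borel_measurable_continuous_on_restrict[OF that])
  have cont_powr: "continuous_on (cball 0 1) (\<lambda>z. cmod (g z) powr q)" if "continuous_on (cball 0 1) g" for g
    by (rule continuous_on_powr'[where g = "\<lambda>_. q"]) (use that q in \<open>auto intro!: continuous_intros\<close>)
  have sphM: "sphere 0 1 \<in> sets M"
    unfolding sM by (subst sets_restrict_space_iff) (auto intro: borel_closed)
  obtain B where B: "\<And>z. z \<in> cball 0 1 \<Longrightarrow> cmod (f z) powr q \<le> B"
    using compact_imp_bounded[OF compact_continuous_image[OF cont_powr[OF cf] compact_cball]]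
    by (force simp: bounded_real)
  define lim where "lim z = indicator (sphere 0 1) z * cmod (f z) powr q" for z :: complex
  have "(\<lambda>n. \<integral>z. cmod (z ^ n * f z) powr q \<partial>M) \<longlonglongrightarrow> integral\<^sup>L M lim"
  proof (rule integral_dominated_convergence[where w = "\<lambda>_. B"])
    show "lim \<in> borel_measurable M"
      unfolding lim_def by (intro borel_measurable_times borel_measurable_indicator sphM meas cont_powr cf)
    show "(\<lambda>z. cmod (z ^ n * f z) powr q) \<in> borel_measurable M" for n
      using cf by (intro meas cont_powr) (auto intro!: continuous_intros)
    show "integrable M (\<lambda>_. B)"
      using finite_measure.integrable_const[OF fin] .
    show "AE z in M. (\<lambda>n. cmod (z ^ n * f z) powr q) \<longlonglongrightarrow> lim z"
    proof (rule AE_I2)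
      fix z assume "z \<in> space M"
      then have z: "norm z \<le> 1"
        by (simp add: spM)
      show "(\<lambda>n. cmod (z ^ n * f z) powr q) \<longlonglongrightarrow> lim z"
      proof (cases "norm z = 1")
        case True
        then show ?thesis by (simp add: lim_def norm_mult norm_power)
      next
        case False
        then have "(\<lambda>n. norm z ^ n * cmod (f z)) \<longlonglongrightarrow> 0 * cmod (f z)"
          using z by (intro tendsto_mult tendsto_const LIMSEQ_power_zero) simp
        then have "(\<lambda>n. cmod (z ^ n * f z) powr q) \<longlonglongrightarrow> 0"
          by (intro tendsto_zero_powrI[where b = q]) (auto simp: norm_mult norm_power q)
        then show ?thesis
          using False by (simp add: lim_def)
      qed
    qed
    show "AE z in M. norm (cmod (z ^ n * f z) powr q) \<le> B" for n
    proof (rule AE_I2)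
      fix z assume "z \<in> space M"
      then have z: "z \<in> cball 0 1"
        by (simp add: spM)
      then have "cmod (z ^ n * f z) \<le> cmod (f z)"
        by (simp add: norm_mult norm_power mult_left_le_one_le power_le_one)
      then have "cmod (z ^ n * f z) powr q \<le> cmod (f z) powr q"
        using q by (intro powr_mono2) auto
      then show "norm (cmod (z ^ n * f z) powr q) \<le> B"
        using B[OF z] by simp
    qed
  qed
  moreover have "integral\<^sup>L M lim = (\<integral>z. cmod (f z) powr q \<partial>restrict_space M (sphere 0 1))"
    using sphM spM by (subst integral_restrict_space) (auto simp: lim_def[abs_def] Int_absorb2)
  ultimately show ?thesis
    by simp
qed

lemma Lq_norm_mult_power_tendsto_sphere:
  fixes M :: "complex measure" and f :: "complex \<Rightarrow> complex"
  assumes "finite_measure M" "sets M = sets (restrict_space borel (cball (0::complex) 1))"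
    and "continuous_on (cball 0 1) f" "0 < q"
  shows "(\<lambda>n. Lq_norm q M (\<lambda>z. z ^ n * f z)) \<longlonglongrightarrow> Lq_norm q (restrict_space M (sphere 0 1)) f"
  unfolding Lq_norm_def using assms
  by (intro tendsto_powr' integral_mult_power_tendsto_sphere) auto

theorem lemma3p1:
  fixes p q C :: real and M :: "complex measure"
  assumes "0 < p" and "0 < q" and "0 < C"
    and "finite_measure M"
    and "sets M = sets (restrict_space borel (cball (0::complex) 1))"
    and "\<forall>f. in_Hardy p f \<and> continuous_on (cball 0 1) f \<longrightarrow>
              Hardy_norm p f \<le> C * Lq_norm q M f"
  shows "\<forall>f. in_Hardy p f \<and> continuous_on (cball 0 1) f \<longrightarrow>
              Hardy_norm p f \<le> C * Lq_norm q (restrict_space M (sphere 0 1)) f"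
proof (intro allI impI)
  fix f :: "complex \<Rightarrow> complex"
  assume "in_Hardy p f \<and> continuous_on (cball 0 1) f"
  then have H: "in_Hardy p f" and cf: "continuous_on (cball 0 1) f"
    by auto
  have "circle_mean p f r powr (1 / p) \<le> C * Lq_norm q M (\<lambda>z. z ^ n * f z)" if "r \<in> {0<..<1}" for r n
  proof -
    have "circle_mean p f r powr (1 / p) \<le> Hardy_norm p (\<lambda>z. z ^ n * f z)"
      using H assms(1) that by (rule circle_mean_powr_le_Hardy_norm_mult_power)
    also have "\<dots> \<le> C * Lq_norm q M (\<lambda>z. z ^ n * f z)"
      using assms(6) in_Hardy_mult_power[OF H assms(1)] continuous_on_mult[OF continuous_on_power[OF continuous_on_id] cf]
      by blast
    finally show ?thesis .
  qed
  moreover have "(\<lambda>n. C * Lq_norm q M (\<lambda>z. z ^ n * f z)) \<longlonglongrightarrow> C * Lq_norm q (restrict_space M (sphere 0 1)) f"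
    using assms(2,4,5) cf by (intro tendsto_mult_left Lq_norm_mult_power_tendsto_sphere)
  ultimately have "circle_mean p f r powr (1 / p) \<le> C * Lq_norm q (restrict_space M (sphere 0 1)) f"
    if "r \<in> {0<..<1}" for r
    using that by (intro LIMSEQ_le_const) auto
  then show "Hardy_norm p f \<le> C * Lq_norm q (restrict_space M (sphere 0 1)) f"
    by (rule Hardy_norm_le[OF assms(1)])
qed

end
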